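(* Let $T:M_d\to M_d$ be completely positive with $T(I)\le I$ and finite stabilization index, and let $Q$ be its orbit-support projection. Then \[ \mathrm{rank}(Q)\le\mathrm{rank}(d(T))+\mathrm{rank}(T(I))-\dim\big(\mathrm{Ran}(d(T))\cap\mathrm{Ran}(T(I))\big), \] and in particular $\mathrm{rank}(Q)\le\min\{d,\ \mathrm{rank}(d(T))+\mathrm{rank}(T(I))\}$.
   Context: $d(T)=I-T(I)$; $n_T=\min\{n\ge1: T^n(d(T))=0\}$. For positive semidefinite $x$, $\mathrm{supp}(x)$ is the orthogonal projection onto $\mathrm{Ran}(x)$. The orbit-support projection is $Q=\bigvee_{k<n_T}\mathrm{supp}(T^k(d(T)))$. *)

theory Defs
  imports "HOL-Analysis.Analysis" "HOL-Library.Complex_Order"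
begin

text \<open>Matrices in M_d are represented as complex^'d^'d (d = CARD('d)).\<close>

definition cinner :: "complex^'d \<Rightarrow> complex^'d \<Rightarrow> complex" where
  "cinner x y = (\<Sum>i\<in>UNIV. cnj (x$i) * y$i)"

definition cadj :: "complex^'d^'d \<Rightarrow> complex^'d^'d" where
  "cadj A = (\<chi> i j. cnj (A$j$i))"

definition cscale :: "complex \<Rightarrow> complex^'d^'d \<Rightarrow> complex^'d^'d" where
  "cscale c A = (\<chi> i j. c * A$i$j)"

definition psd :: "complex^'d^'d \<Rightarrow> bool" where
  "psd A \<longleftrightarrow> (\<forall>x. 0 \<le> cinner x (A *v x))"

definition loewner_le :: "complex^'d^'d \<Rightarrow> complex^'d^'d \<Rightarrow> bool" where
  "loewner_le A B \<longleftrightarrow> psd (B - A)"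

text \<open>A k x k block matrix [X i j] (i,j<k) with blocks in M_d, viewed as an element of
  M_k(M_d) = M_{kd}, is positive semidefinite.\<close>
definition block_psd :: "nat \<Rightarrow> (nat \<Rightarrow> nat \<Rightarrow> complex^'d^'d) \<Rightarrow> bool" where
  "block_psd k X \<longleftrightarrow>
     (\<forall>v :: nat \<Rightarrow> complex^'d. 0 \<le> (\<Sum>i<k. \<Sum>j<k. cinner (v i) (X i j *v v j)))"

definition clinear_map :: "(complex^'d^'d \<Rightarrow> complex^'e^'e) \<Rightarrow> bool" where
  "clinear_map T \<longleftrightarrow> (\<forall>A B. T (A + B) = T A + T B) \<and> (\<forall>c A. T (cscale c A) = cscale c (T A))"

text \<open>Complete positivity: T is linear and id_k \<otimes> T is positive for every k.\<close>
definition completely_positive :: "(complex^'d^'d \<Rightarrow> complex^'e^'e) \<Rightarrow> bool" where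
  "completely_positive T \<longleftrightarrow> clinear_map T \<and>
     (\<forall>k X. block_psd k X \<longrightarrow> block_psd k (\<lambda>i j. T (X i j)))"

definition Ran :: "complex^'d^'d \<Rightarrow> (complex^'d) set" where
  "Ran A = range (\<lambda>v. A *v v)"

definition orth_proj :: "(complex^'d) set \<Rightarrow> complex^'d^'d" where
  "orth_proj S = (THE P. P ** P = P \<and> cadj P = P \<and> Ran P = S)"

definition supp :: "complex^'d^'d \<Rightarrow> complex^'d^'d" where
  "supp x = orth_proj (Ran x)"

definition proj_Sup :: "(complex^'d^'d) set \<Rightarrow> complex^'d^'d" where
  "proj_Sup Ps = orth_proj (vec.span (\<Union>P\<in>Ps. Ran P))"

definition defect :: "(complex^'d^'d \<Rightarrow> complex^'d^'d) \<Rightarrow> complex^'d^'d" where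
  "defect T = mat 1 - T (mat 1)"

definition stab_index :: "(complex^'d^'d \<Rightarrow> complex^'d^'d) \<Rightarrow> nat" where
  "stab_index T = (LEAST n. n \<ge> 1 \<and> (T ^^ n) (defect T) = 0)"

definition finite_stab_index :: "(complex^'d^'d \<Rightarrow> complex^'d^'d) \<Rightarrow> bool" where
  "finite_stab_index T \<longleftrightarrow> (\<exists>n\<ge>1. (T ^^ n) (defect T) = 0)"

definition orbit_support :: "(complex^'d^'d \<Rightarrow> complex^'d^'d) \<Rightarrow> complex^'d^'d" where
  "orbit_support T = proj_Sup {supp ((T ^^ k) (defect T)) | k. k < stab_index T}"

end

theory Submission
  imports Defs
begin

text \<open>
  For \<open>k \<ge> 1\<close> the iterate \<open>T\<^sup>k(d(T))\<close> is \<open>T(X)\<close> for a positive matrix \<open>X\<close>. As \<open>X \<le> c I\<close>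
  for some scalar \<open>c\<close>, positivity of \<open>T\<close> gives \<open>0 \<le> T(X) \<le> c T(I)\<close>, and a Loewner inequality
  \<open>0 \<le> A \<le> B\<close> forces \<open>Ran A \<subseteq> Ran B\<close>. So every support in the join defining \<open>Q\<close> lies in
  \<open>Ran d(T) + Ran T(I)\<close>, and the bound is the dimension formula for a sum of two subspaces.
  Only positivity of \<open>T\<close> (complete positivity at level one) is used, and the argument works for
  the join over any set of iterates, so finiteness of the stabilization index plays no role.
\<close>

lemma dim_rows_le_dim_columns_gen:
  fixes A :: "'a::field^'n^'m"
  shows "vec.dim (rows A) \<le> vec.dim (columns A)"
proof -
  obtain B where B: "B \<subseteq> vec.span (columns A)" "vec.independent B"
    "vec.span (columns A) \<subseteq> vec.span B" "card B = vec.dim (vec.span (columns A))"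
    using vec.basis_exists by blast
  have fin: "finite B" using vec.finiteI_independent B(2) by blast
  have "\<exists>u. column j A = (\<Sum>b\<in>B. u b *s b)" for j
  proof -
    have "column j A \<in> vec.span B"
      using B(3) vec.span_base[of "column j A" "columns A"] by (auto simp: columns_def)
    then show ?thesis using vec.span_finite[OF fin] by auto
  qed
  then obtain u where u: "\<And>j. column j A = (\<Sum>b\<in>B. u j b *s b)" by metis
  define \<rho> where "\<rho> b = (\<chi> j. u j b)" for b
  have "row i A = (\<Sum>b\<in>B. (b$i) *s \<rho> b)" for i
  proof (subst vec_eq_iff, intro allI)
    fix j
    have "row i A $ j = column j A $ i" by (simp add: row_def column_def)
    also have "\<dots> = (\<Sum>b\<in>B. u j b * b$i)" by (subst u) (simp add: sum_component)
    also have "\<dots> = (\<Sum>b\<in>B. (b$i) *s \<rho> b) $ j" by (simp add: sum_component \<rho>_def mult.commute)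
    finally show "row i A $ j = (\<Sum>b\<in>B. (b$i) *s \<rho> b) $ j" .
  qed
  then have "rows A \<subseteq> vec.span (\<rho> ` B)"
    by (auto simp: rows_def intro!: vec.span_sum vec.span_scale intro: vec.span_base)
  then have "vec.dim (rows A) \<le> card (\<rho> ` B)" using fin by (intro vec.dim_le_card) auto
  also have "\<dots> \<le> card B" using fin card_image_le by blast
  finally show ?thesis using B(4) by simp
qed

lemma rank_dim_range_gen:
  fixes A :: "'a::field^'n^'m"
  shows "rank A = vec.dim (range (\<lambda>x. A *v x))"
proof -
  have "rank A = vec.dim (columns A)"
    using dim_rows_le_dim_columns_gen[of A] dim_rows_le_dim_columns_gen[of "transpose A"]
    by (simp add: row_rank_def_gen rows_transpose columns_transpose)
  also have "\<dots> = vec.dim (range (\<lambda>x. A *v x))"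
    unfolding vec.dim_span[symmetric, of "columns A"] vec.dim_span[symmetric, of "range _"]
  proof (intro arg_cong[where f = vec.dim] iffD2[OF vec.span_eq] conjI)
    have "column j A = A *v axis j 1" for j
      by (simp add: vec_eq_iff column_def matrix_vector_mult_def axis_def if_distrib if_distribR
          cong: if_cong)
    then show "columns A \<subseteq> vec.span (range (\<lambda>x. A *v x))"
      by (auto simp: columns_def intro: vec.span_base)
    show "range (\<lambda>x. A *v x) \<subseteq> vec.span (columns A)"
      by (auto intro: matrix_vector_mult_in_columnspace_gen)
  qed
  finally show ?thesis .
qed

lemma rank_eq_dim_Ran: "rank A = vec.dim (Ran A)"
  by (simp add: rank_dim_range_gen Ran_def)

lemma Ran_subspace: "vec.subspace (Ran A)"
  unfolding Ran_def by (metis image_image vec.subspace_UNIV vec.subspace_image)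

lemma cinner_add_left: "cinner (x + y) z = cinner x z + cinner y z"
  by (simp add: cinner_def distrib_right sum.distrib)

lemma cinner_add_right: "cinner x (y + z) = cinner x y + cinner x z"
  by (simp add: cinner_def distrib_left sum.distrib)

lemma cinner_diff_left: "cinner (x - y) z = cinner x z - cinner y z"
  by (simp add: cinner_def left_diff_distrib sum_subtractf)

lemma cinner_diff_right: "cinner x (y - z) = cinner x y - cinner x z"
  by (simp add: cinner_def right_diff_distrib sum_subtractf)

lemma cinner_scale_left: "cinner (c *s x) y = cnj c * cinner x y"
  by (simp add: cinner_def sum_distrib_left algebra_simps)

lemma cinner_scale_right: "cinner x (c *s y) = c * cinner x y"
  by (simp add: cinner_def sum_distrib_left algebra_simps)

lemma cinner_sum_left: "cinner (\<Sum>j\<in>I. f j) y = (\<Sum>j\<in>I. cinner (f j) y)"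
  by (simp add: cinner_def sum_distrib_right sum_component) (rule sum.swap)

lemma cnj_cinner: "cnj (cinner x y) = cinner y x"
  by (simp add: cinner_def mult.commute)

lemma cinner_self: "cinner x x = of_real (\<Sum>i\<in>UNIV. (cmod (x$i))\<^sup>2)"
  by (simp only: cinner_def complex_norm_square of_real_sum mult.commute)

lemma cinner_self_eq_0 [simp]: "cinner x x = 0 \<longleftrightarrow> x = 0"
proof -
  have "cinner x x = 0 \<longleftrightarrow> (\<forall>i. (cmod (x$i))\<^sup>2 = 0)"
    unfolding cinner_self of_real_eq_0_iff by (simp add: sum_nonneg_eq_0_iff)
  then show ?thesis by (simp add: vec_eq_iff)
qed

lemma cinner_axis: "cinner (axis i 1) v = v$i"
  by (simp add: cinner_def axis_def if_distrib if_distribR cong: if_cong)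

lemma cadj_mult: "cadj (A ** B) = cadj B ** cadj A"
  by (simp add: cadj_def matrix_matrix_mult_def vec_eq_iff mult.commute)

lemma inner_eq_Re_cinner: "inner x y = Re (cinner (x::complex^'d) y)"
  by (simp add: inner_vec_def cinner_def Re_sum inner_complex_def)

definition is_orth_proj :: "(complex^'d) set \<Rightarrow> complex^'d \<Rightarrow> complex^'d \<Rightarrow> bool" where
  "is_orth_proj S x p \<longleftrightarrow> p \<in> S \<and> (\<forall>s\<in>S. cinner (x - p) s = 0)"

text \<open>
  The real orthogonal decomposition in the Euclidean space \<open>complex^'d\<close>, whose inner product is
  \<open>Re \<langle>x, y\<rangle>\<close>, already works: orthogonality to \<open>s\<close> and to \<open>\<i> s\<close> kills the real and the
  imaginary part of \<open>\<langle>z, s\<rangle>\<close>.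
\<close>
lemma is_orth_proj_exists:
  fixes S :: "(complex^'d) set"
  assumes S: "vec.subspace S"
  shows "\<exists>p. is_orth_proj S x p"
proof -
  have "r *\<^sub>R v = complex_of_real r *s v" for r and v :: "complex^'d"
    unfolding vec_eq_iff vector_scaleR_component vector_smult_component
    by (simp add: scaleR_conv_of_real)
  then have span_S: "span S = S"
    using S by (simp add: span_eq_iff subspace_def vec.subspace_def)
  obtain p z where p: "p \<in> span S" and z: "\<And>w. w \<in> span S \<Longrightarrow> orthogonal z w"
    and x: "x = p + z"
    using orthogonal_subspace_decomp_exists[of S x] by metis
  have "cinner z s = 0" if s: "s \<in> S" for s
  proof -
    have "\<i> *s s \<in> S" using vec.subspace_scale[OF S s] .
    then have "Re (cinner z s) = 0" "Re (cinner z (\<i> *s s)) = 0"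
      using z s span_S by (auto simp: orthogonal_def inner_eq_Re_cinner)
    then show ?thesis by (simp add: cinner_scale_right complex_eq_iff)
  qed
  then show ?thesis using p x span_S unfolding is_orth_proj_def by (intro exI[of _ p]) auto
qed

lemma is_orth_proj_unique:
  assumes S: "vec.subspace S" and "is_orth_proj S x p" "is_orth_proj S x q"
  shows "p = q"
proof -
  have pq: "p - q \<in> S" using assms by (simp add: is_orth_proj_def vec.subspace_diff)
  have "cinner (p - q) (p - q) = cinner (x - q) (p - q) - cinner (x - p) (p - q)"
    by (simp add: cinner_diff_left)
  also have "\<dots> = 0" using pq assms(2,3) by (simp add: is_orth_proj_def)
  finally show ?thesis by simp
qed

lemma is_orth_proj_self: "s \<in> S \<Longrightarrow> is_orth_proj S s s"
  by (simp add: is_orth_proj_def cinner_def)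

lemma is_orth_proj_sum:
  assumes S: "vec.subspace S" and proj: "\<And>j. j \<in> I \<Longrightarrow> is_orth_proj S (u j) (p j)"
  shows "is_orth_proj S (\<Sum>j\<in>I. c j *s u j) (\<Sum>j\<in>I. c j *s p j)"
  unfolding is_orth_proj_def
proof (intro conjI ballI)
  show "(\<Sum>j\<in>I. c j *s p j) \<in> S"
    using proj by (intro vec.subspace_sum[OF S] vec.subspace_scale[OF S]) (simp add: is_orth_proj_def)
  fix s assume "s \<in> S"
  have "cinner ((\<Sum>j\<in>I. c j *s u j) - (\<Sum>j\<in>I. c j *s p j)) s
      = (\<Sum>j\<in>I. cnj (c j) * cinner (u j - p j) s)"
    by (simp add: cinner_diff_left cinner_sum_left cinner_scale_left sum_subtractf
        right_diff_distrib)
  also have "\<dots> = 0" using proj \<open>s \<in> S\<close> by (simp add: is_orth_proj_def)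
  finally show "cinner ((\<Sum>j\<in>I. c j *s u j) - (\<Sum>j\<in>I. c j *s p j)) s = 0" .
qed

lemma is_orth_proj_cinner_commute:
  assumes "is_orth_proj S x p" "is_orth_proj S y q"
  shows "cinner x q = cinner p y"
proof -
  have "cinner (x - p) q = 0" "cnj (cinner (y - q) p) = 0"
    using assms by (simp_all add: is_orth_proj_def)
  then show ?thesis by (simp add: cinner_diff_left cinner_diff_right cnj_cinner)
qed

lemma orth_proj_matrix_exists:
  assumes S: "vec.subspace S"
  shows "\<exists>P. \<forall>x. is_orth_proj S x (P *v x)"
proof -
  obtain f where f: "\<And>x. is_orth_proj S x (f x)" using is_orth_proj_exists[OF S] by metis
  have "is_orth_proj S x (matrix f *v x)" for x
  proof -
    have "matrix f *v x = (\<Sum>j\<in>UNIV. x$j *s f (axis j 1))"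
      by (simp add: matrix_mult_sum column_def matrix_def vec_eq_iff)
    then show ?thesis
      using is_orth_proj_sum[OF S, where I = UNIV and u = "\<lambda>j. axis j 1" and p = "\<lambda>j. f (axis j 1)"
          and c = "\<lambda>j. x$j"] f by (simp add: basis_expansion)
  qed
  then show ?thesis by blast
qed

lemma orth_proj_exists:
  assumes S: "vec.subspace S"
  shows "\<exists>P. P ** P = P \<and> cadj P = P \<and> Ran P = S"
proof -
  obtain P where P: "\<And>x. is_orth_proj S x (P *v x)" using orth_proj_matrix_exists[OF S] by blast
  then have PS: "P *v x \<in> S" for x by (simp add: is_orth_proj_def)
  have fix_S: "P *v s = s" if "s \<in> S" for s
    using is_orth_proj_unique[OF S P is_orth_proj_self[OF that]] .
  have "P ** P = P"
    unfolding matrix_eq by (simp add: fix_S PS flip: matrix_vector_mul_assoc)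
  moreover have "cadj P = P"
  proof -
    have entry: "P$i$j = cinner (axis i 1) (P *v axis j 1)" for i j
      unfolding cinner_axis
      by (simp add: matrix_vector_mult_def axis_def if_distrib if_distribR cong: if_cong)
    have "cnj (P$j$i) = P$i$j" for i j
      unfolding entry cnj_cinner using is_orth_proj_cinner_commute[OF P P] by metis
    then show ?thesis by (simp add: cadj_def vec_eq_iff)
  qed
  moreover have "Ran P = S"
    unfolding Ran_def using PS fix_S by (metis image_subset_iff rangeI subsetI subset_antisym)
  ultimately show ?thesis by blast
qed

lemma idempotent_mult_absorb:
  fixes A B :: "'a::comm_semiring_1^'n^'n"
  assumes "A ** A = A" "range (\<lambda>x. B *v x) \<subseteq> range (\<lambda>x. A *v x)"
  shows "A ** B = B"
  unfolding matrix_eq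
proof
  fix v
  obtain u where "B *v v = A *v u" using assms(2) by blast
  then show "(A ** B) *v v = B *v v"
    by (metis assms(1) matrix_vector_mul_assoc)
qed

lemma orth_proj_eq:
  assumes "P ** P = P" "cadj P = P" "Ran P = S"
  shows "orth_proj S = P"
  unfolding orth_proj_def
proof (rule the_equality)
  show "P ** P = P \<and> cadj P = P \<and> Ran P = S" using assms by blast
  fix P' assume P': "P' ** P' = P' \<and> cadj P' = P' \<and> Ran P' = S"
  then have "P' ** P = P" "P ** P' = P'"
    using assms by (simp_all add: idempotent_mult_absorb Ran_def)
  then have "P = cadj P ** cadj P'" by (metis assms(2) cadj_mult)
  also have "\<dots> = P'" using P' assms(2) \<open>P ** P' = P'\<close> by simp
  finally show "P' = P" by simp
qed

lemma Ran_orth_proj: "vec.subspace S \<Longrightarrow> Ran (orth_proj S) = S"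
  using orth_proj_exists orth_proj_eq by metis

lemma nonneg_quadratic_linear_coeff_eq_0:
  fixes p q :: real
  assumes "\<And>s. 0 \<le> s * p + s\<^sup>2 * q" "0 \<le> q"
  shows "p = 0"
proof -
  have "0 \<le> (q + 1)\<^sup>2 * ((- p / (q + 1)) * p + (- p / (q + 1))\<^sup>2 * q)"
    by (rule mult_nonneg_nonneg[OF zero_le_power2 assms(1)])
  also have "\<dots> = - p\<^sup>2"
    using assms(2) by (simp add: power2_eq_square divide_simps) (simp add: algebra_simps)
  finally show ?thesis by simp
qed

lemma psd_form_eq_0_imp:
  assumes A: "psd A" and z: "cinner z (A *v z) = 0"
  shows "cinner z (A *v w) = 0"
proof -
  define a b c where "a = cinner z (A *v w)" and "b = cinner w (A *v z)" and "c = cinner w (A *v w)"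
  have form: "0 \<le> t * a + cnj t * b + cnj t * t * c" for t
  proof -
    have "0 \<le> cinner (z + t *s w) (A *v (z + t *s w))" using A by (simp add: psd_def)
    also have "\<dots> = t * a + cnj t * b + cnj t * t * c"
      by (simp add: a_def b_def c_def z matrix_vector_right_distrib vec.scale cinner_add_left
          cinner_add_right cinner_scale_left cinner_scale_right algebra_simps)
    finally show ?thesis .
  qed
  have "0 \<le> c" using A by (simp add: psd_def c_def)
  then have c: "Im c = 0" "0 \<le> Re c" by (auto simp: less_eq_complex_def)
  have "Re (a + b) = 0"
  proof (rule nonneg_quadratic_linear_coeff_eq_0)
    show "0 \<le> s * Re (a + b) + s\<^sup>2 * Re c" for s
      using form[of "of_real s"] c by (auto simp: less_eq_complex_def power2_eq_square algebra_simps)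
  qed (fact c(2))
  moreover have "- Im (a - b) = 0"
  proof (rule nonneg_quadratic_linear_coeff_eq_0)
    show "0 \<le> s * - Im (a - b) + s\<^sup>2 * Re c" for s
      using form[of "\<i> * of_real s"] c
      by (auto simp: less_eq_complex_def power2_eq_square algebra_simps)
  qed (fact c(2))
  moreover have "Im (a + b) = 0" "Re (a - b) = 0"
    using form[of 1] form[of \<i>] c by (auto simp: less_eq_complex_def algebra_simps)
  ultimately show ?thesis by (simp add: a_def complex_eq_iff)
qed

lemma Ran_mono_loewner_le:
  assumes A: "psd A" and AB: "loewner_le A B"
  shows "Ran A \<subseteq> Ran B"
proof
  fix y assume "y \<in> Ran A"
  then obtain x where y: "y = A *v x" by (auto simp: Ran_def)
  obtain p where p: "is_orth_proj (Ran B) y p" using is_orth_proj_exists[OF Ran_subspace] by blast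
  define z where "z = y - p"
  have z_perp: "cinner z s = 0" if "s \<in> Ran B" for s
    using p that by (simp add: is_orth_proj_def z_def)
  have "0 \<le> cinner z ((B - A) *v z)" using AB by (simp add: loewner_le_def psd_def)
  moreover have "cinner z (B *v z) = 0" by (simp add: z_perp Ran_def)
  moreover have "0 \<le> cinner z (A *v z)" using A by (simp add: psd_def)
  ultimately have "cinner z (A *v z) = 0"
    by (auto simp: matrix_vector_mult_diff_rdistrib cinner_diff_right less_eq_complex_def
        complex_eq_iff)
  then have "cinner z y = 0" using psd_form_eq_0_imp[OF A] y by blast
  moreover have "cinner z p = 0" using p z_perp by (simp add: is_orth_proj_def)
  ultimately have "z = 0" by (metis cinner_diff_right cinner_self_eq_0 diff_zero z_def)
  then show "y \<in> Ran B" using p by (simp add: z_def is_orth_proj_def)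
qed

lemma cmod_cinner_le:
  "cmod (cinner x (A *v x)) \<le> (\<Sum>i\<in>UNIV. \<Sum>j\<in>UNIV. cmod (A$i$j)) * (\<Sum>i\<in>UNIV. (cmod (x$i))\<^sup>2)"
  (is "_ \<le> ?C * ?N")
proof -
  have x_le: "cmod (x$i) * cmod (x$j) \<le> ?N" for i j
    using sum_squares_bound[of "cmod (x$i)" "cmod (x$j)"]
      member_le_sum[of i UNIV "\<lambda>i. (cmod (x$i))\<^sup>2"] member_le_sum[of j UNIV "\<lambda>i. (cmod (x$i))\<^sup>2"]
    by simp
  have "cmod (cinner x (A *v x)) = cmod (\<Sum>i\<in>UNIV. \<Sum>j\<in>UNIV. cnj (x$i) * (A$i$j * x$j))"
    by (simp add: cinner_def matrix_vector_mult_def sum_distrib_left)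
  also have "\<dots> \<le> (\<Sum>i\<in>UNIV. \<Sum>j\<in>UNIV. cmod (A$i$j) * (cmod (x$i) * cmod (x$j)))"
    by (rule order.trans[OF norm_sum sum_mono], rule order.trans[OF norm_sum])
      (simp add: norm_mult mult_ac)
  also have "\<dots> \<le> (\<Sum>i\<in>UNIV. \<Sum>j\<in>UNIV. cmod (A$i$j) * ?N)"
    by (intro sum_mono mult_left_mono x_le norm_ge_zero)
  also have "\<dots> = ?C * ?N" by (simp add: sum_distrib_right)
  finally show ?thesis .
qed

lemma cscale_mat_1_mult: "cscale c (mat 1) *v x = c *s x"
  by (simp add: vec_eq_iff matrix_vector_mult_def cscale_def mat_def if_distrib if_distribR
      cong: if_cong)

lemma psd_loewner_le_scalar:
  assumes A: "psd A"
  shows "\<exists>c. loewner_le A (cscale c (mat 1))"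
proof -
  define C where "C = (\<Sum>i\<in>UNIV. \<Sum>j\<in>UNIV. cmod (A$i$j))"
  have "0 \<le> cinner x ((cscale (of_real C) (mat 1) - A) *v x)" for x
  proof -
    define N where "N = (\<Sum>i\<in>UNIV. (cmod (x$i))\<^sup>2)"
    define q where "q = cinner x (A *v x)"
    have "0 \<le> q" using A by (simp add: psd_def q_def)
    moreover have "Re q \<le> C * N"
      using complex_Re_le_cmod[of q] cmod_cinner_le[of x A] by (simp add: C_def N_def q_def)
    moreover have "cinner x ((cscale (of_real C) (mat 1) - A) *v x) = of_real (C * N) - q"
      by (simp add: matrix_vector_mult_diff_rdistrib cinner_diff_right cscale_mat_1_mult
          cinner_scale_right cinner_self N_def q_def)
    ultimately show ?thesis by (auto simp: less_eq_complex_def)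
  qed
  then show ?thesis unfolding loewner_le_def psd_def by blast
qed

lemma Ran_cscale_subset: "Ran (cscale c B) \<subseteq> Ran B"
proof -
  have "cscale c B *v v = B *v (c *s v)" for v
    by (simp add: vec_eq_iff matrix_vector_mult_def cscale_def sum_distrib_left algebra_simps)
  then show ?thesis by (auto simp: Ran_def)
qed

lemma completely_positive_diff: "completely_positive T \<Longrightarrow> T (A - B) = T A - T B"
  unfolding completely_positive_def clinear_map_def by (metis add_diff_cancel diff_add_cancel)

lemma completely_positive_cscale: "completely_positive T \<Longrightarrow> T (cscale c A) = cscale c (T A)"
  by (simp add: completely_positive_def clinear_map_def)

lemma block_psd_1_iff: "block_psd 1 (\<lambda>_ _. A) \<longleftrightarrow> psd A"
  unfolding block_psd_def psd_def by (auto dest: spec[where x = "\<lambda>_. _"])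

lemma completely_positive_psd: "completely_positive T \<Longrightarrow> psd A \<Longrightarrow> psd (T A)"
  unfolding completely_positive_def block_psd_1_iff[symmetric] by blast

lemma completely_positive_Ran_subset_Ran_one:
  assumes T: "completely_positive T" and A: "psd A"
  shows "Ran (T A) \<subseteq> Ran (T (mat 1))"
proof -
  obtain c where "loewner_le A (cscale c (mat 1))" using psd_loewner_le_scalar[OF A] by blast
  then have "psd (T (cscale c (mat 1) - A))" by (simp add: loewner_le_def completely_positive_psd T)
  then have "loewner_le (T A) (cscale c (T (mat 1)))"
    by (simp add: loewner_le_def completely_positive_diff completely_positive_cscale T)
  then have "Ran (T A) \<subseteq> Ran (cscale c (T (mat 1)))"
    using Ran_mono_loewner_le completely_positive_psd[OF T A] by blast
  then show ?thesis using Ran_cscale_subset by blast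
qed

lemma Ran_iterate_subset:
  assumes T: "completely_positive T" and A: "psd A"
  shows "Ran ((T ^^ k) A) \<subseteq> {x + y |x y. x \<in> Ran A \<and> y \<in> Ran (T (mat 1))}"
proof (cases k)
  case 0
  then show ?thesis using vec.subspace_0[OF Ran_subspace] by force
next
  case (Suc m)
  have "psd ((T ^^ m) A)" by (induction m) (simp_all add: A completely_positive_psd[OF T])
  then have "Ran ((T ^^ k) A) \<subseteq> Ran (T (mat 1))"
    using completely_positive_Ran_subset_Ran_one[OF T] Suc by simp
  then show ?thesis using vec.subspace_0[OF Ran_subspace] by force
qed

lemma Ran_supp: "Ran (supp A) = Ran A"
  by (simp add: supp_def Ran_orth_proj Ran_subspace)

lemma Ran_proj_Sup: "Ran (proj_Sup Ps) = vec.span (\<Union>P\<in>Ps. Ran P)"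
  by (simp add: proj_Sup_def Ran_orth_proj)

lemma Ran_orbit_support_subset:
  assumes "completely_positive T" "psd (defect T)"
  shows "Ran (orbit_support T) \<subseteq> {x + y |x y. x \<in> Ran (defect T) \<and> y \<in> Ran (T (mat 1))}"
proof -
  have "Ran P \<subseteq> {x + y |x y. x \<in> Ran (defect T) \<and> y \<in> Ran (T (mat 1))}"
    if "P \<in> {supp ((T ^^ k) (defect T)) |k. k < stab_index T}" for P
    using that Ran_iterate_subset[OF assms] by (force simp only: Ran_supp)
  then show ?thesis
    unfolding orbit_support_def Ran_proj_Sup
    by (intro vec.span_minimal vec.subspace_sums Ran_subspace) blast
qed

theorem proposition8p29:
  fixes T :: "complex^'d^'d \<Rightarrow> complex^'d^'d"
  assumes "completely_positive T"
    and "loewner_le (T (mat 1)) (mat 1)"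
    and "finite_stab_index T"
  shows "rank (orbit_support T)
           \<le> rank (defect T) + rank (T (mat 1)) - vec.dim (Ran (defect T) \<inter> Ran (T (mat 1)))
         \<and> rank (orbit_support T) \<le> min CARD('d) (rank (defect T) + rank (T (mat 1)))"
proof -
  have "psd (defect T)" using assms(2) by (simp add: defect_def loewner_le_def)
  then have "rank (orbit_support T)
      \<le> vec.dim {x + y |x y. x \<in> Ran (defect T) \<and> y \<in> Ran (T (mat 1))}"
    unfolding rank_eq_dim_Ran by (intro vec.dim_subset Ran_orbit_support_subset assms(1))
  moreover have "vec.dim {x + y |x y. x \<in> Ran (defect T) \<and> y \<in> Ran (T (mat 1))}
      + vec.dim (Ran (defect T) \<inter> Ran (T (mat 1))) = rank (defect T) + rank (T (mat 1))"
    unfolding rank_eq_dim_Ran by (intro vec.dim_sums_Int Ran_subspace)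
  moreover have "rank (orbit_support T) \<le> CARD('d)"
    unfolding rank_eq_dim_Ran by (rule dim_subset_UNIV_cart_gen)
  ultimately show ?thesis by linarith
qed

end
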